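(* Let $\ell\le D/8$. There is a non-adaptive deterministic group testing algorithm that, when an integer $D$ with $d/4\le D\le 4d$ is known in advance to the algorithm, detects $\ell$ defective items among any defective set $I\subseteq[n]$ of size $d$ and makes $O(d\log(n/d))$ tests.
   Context: Group testing: items $X=[n]$, unknown defective set $I\subseteq X$ with $d=|I|$. A test $Q\subseteq X$ has answer $1$ if $Q\cap I\neq\emptyset$ and $0$ otherwise; the algorithm accesses $I$ only through tests. A non-adaptive algorithm fixes all its tests in advance (they do not depend on answers), then computes its output from the answers. "Detects $\ell$ defective items" means it outputs $L\subseteq I$ with $|L|=\ell$. Logarithms are base 2. *)

theory Defs
  imports Complex_Main
begin

definition test_answer :: "nat set \<Rightarrow> nat set \<Rightarrow> bool" where
  "test_answer I Q \<longleftrightarrow> Q \<inter> I \<noteq> {}"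

text \<open>A non-adaptive deterministic algorithm on [n] is a fixed list of tests Qs
  (each a subset of [n]) together with a decoder f mapping the answer vector to an output.\<close>

definition nonadaptive_alg :: "nat \<Rightarrow> nat set list \<Rightarrow> bool" where
  "nonadaptive_alg n Qs \<longleftrightarrow> (\<forall>Q\<in>set Qs. Q \<subseteq> {1..n})"

definition alg_output :: "nat set list \<Rightarrow> (bool list \<Rightarrow> nat set) \<Rightarrow> nat set \<Rightarrow> nat set" where
  "alg_output Qs f I = f (map (test_answer I) Qs)"

definition detects :: "nat set list \<Rightarrow> (bool list \<Rightarrow> nat set) \<Rightarrow> nat \<Rightarrow> nat set \<Rightarrow> bool" where
  "detects Qs f l I \<longleftrightarrow> alg_output Qs f I \<subseteq> I \<and> card (alg_output Qs f I) = l"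

end

theory Submission
  imports Defs "HOL-Library.FuncSet"
begin

(* The decoder outputs l items that lie in every admissible defective set consistent with the
   answers, so it suffices to choose tests after which at least l items of I are certain.
   If n < 8D, testing all singletons reveals I.  Otherwise, a counting argument over random
   colorings of [n] with 16D colors yields m = O(D log(n/D)) tests (zero sets of the colorings)
   such that for every U of at most 8D items and every S \<subseteq> U of more than D/8 items some test
   meets U in a single point of S.  Let Y be the items outside I lying in no negative test; then
   |Y| < |I|, and every test meeting I \<union> Y in a single point x certifies x.  If fewer than l
   items were certified, more than D/8 defectives would remain uncertified, and one of them
   would be isolated in I \<union> Y by some test, a contradiction. *)

section \<open>Decoding from certainly defective items\<close>

definition certainly_defective :: "nat set set \<Rightarrow> nat set list \<Rightarrow> bool list \<Rightarrow> nat set" where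
  "certainly_defective \<I> Qs a = {x. \<forall>I\<in>\<I>. map (test_answer I) Qs = a \<longrightarrow> x \<in> I}"

(* When fewer than l items are certain, SOME yields an unspecified set. *)
definition certainty_decoder :: "nat set set \<Rightarrow> nat \<Rightarrow> nat set list \<Rightarrow> bool list \<Rightarrow> nat set" where
  "certainty_decoder \<I> l Qs a = (SOME L. L \<subseteq> certainly_defective \<I> Qs a \<and> card L = l)"

lemma certainly_defective_subset:
  "I \<in> \<I> \<Longrightarrow> certainly_defective \<I> Qs (map (test_answer I) Qs) \<subseteq> I"
  unfolding certainly_defective_def by blast

lemma detects_certainty_decoder:
  assumes "I \<in> \<I>" and "l \<le> card (certainly_defective \<I> Qs (map (test_answer I) Qs))"
  shows "detects Qs (certainty_decoder \<I> l Qs) l I"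
proof -
  let ?C = "certainly_defective \<I> Qs (map (test_answer I) Qs)"
  have "\<exists>L. L \<subseteq> ?C \<and> card L = l"
    using obtain_subset_with_card_n[OF assms(2)] by metis
  then have "certainty_decoder \<I> l Qs (map (test_answer I) Qs) \<subseteq> ?C
      \<and> card (certainty_decoder \<I> l Qs (map (test_answer I) Qs)) = l"
    unfolding certainty_decoder_def by (rule someI_ex)
  with certainly_defective_subset[OF assms(1)] show ?thesis
    unfolding detects_def alg_output_def by blast
qed

definition singleton_tests :: "nat \<Rightarrow> nat set list" where
  "singleton_tests n = map (\<lambda>x. {x}) [1..<n+1]"

lemma certainly_defective_singleton_tests:
  assumes "I \<in> \<I>" "I \<subseteq> {1..n}"
  shows "certainly_defective \<I> (singleton_tests n) (map (test_answer I) (singleton_tests n)) = I"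
proof
  show "I \<subseteq> certainly_defective \<I> (singleton_tests n) (map (test_answer I) (singleton_tests n))"
  proof
    fix x assume "x \<in> I"
    with assms(2) have "{x} \<in> set (singleton_tests n)"
      unfolding singleton_tests_def by (auto simp: image_iff)
    with \<open>x \<in> I\<close>
    show "x \<in> certainly_defective \<I> (singleton_tests n) (map (test_answer I) (singleton_tests n))"
      unfolding certainly_defective_def test_answer_def by (auto simp: map_eq_conv)
  qed
qed (rule certainly_defective_subset[OF assms(1)])

section \<open>Isolating test families\<close>

definition isolating :: "nat \<Rightarrow> nat \<Rightarrow> 'a set \<Rightarrow> 'a set list \<Rightarrow> bool" where
  "isolating K s X Qs \<longleftrightarrow>
     (\<forall>U S. U \<subseteq> X \<longrightarrow> card U \<le> K \<longrightarrow> S \<subseteq> U \<longrightarrow> s \<le> card S \<longrightarrow>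
        (\<exists>Q\<in>set Qs. \<exists>x\<in>S. Q \<inter> U = {x}))"

lemma isolatingD:
  "\<lbrakk>isolating K s X Qs; U \<subseteq> X; card U \<le> K; S \<subseteq> U; s \<le> card S\<rbrakk>
     \<Longrightarrow> \<exists>Q\<in>set Qs. \<exists>x\<in>S. Q \<inter> U = {x}"
  unfolding isolating_def by blast

lemma isolatingI_card_eq:
  assumes "finite X" and "K \<le> card X"
    and exact: "\<And>U S. \<lbrakk>U \<subseteq> X; card U = K; S \<subseteq> U; card S = s\<rbrakk>
      \<Longrightarrow> \<exists>Q\<in>set Qs. \<exists>x\<in>S. Q \<inter> U = {x}"
  shows "isolating K s X Qs"
  unfolding isolating_def
proof (intro allI impI)
  fix U S assume U: "U \<subseteq> X" "card U \<le> K" and S: "S \<subseteq> U" "s \<le> card S"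
  obtain S' where S': "S' \<subseteq> S" "card S' = s"
    using obtain_subset_with_card_n[OF S(2)] by metis
  have "finite U" using U(1) \<open>finite X\<close> by (rule finite_subset)
  have "K - card U \<le> card (X - U)"
    using assms(2) U \<open>finite U\<close> by (simp add: card_Diff_subset)
  then obtain V where V: "V \<subseteq> X - U" "card V = K - card U" "finite V"
    using obtain_subset_with_card_n by metis
  have "card (U \<union> V) = K"
    using V U(2) \<open>finite U\<close> by (subst card_Un_disjoint) auto
  with U(1) V(1) S S' obtain Q x where "Q \<in> set Qs" "x \<in> S'" "Q \<inter> (U \<union> V) = {x}"
    using exact[of "U \<union> V" S'] by blast
  with S S' show "\<exists>Q\<in>set Qs. \<exists>x\<in>S. Q \<inter> U = {x}" by blast
qed

definition unexcluded :: "nat set \<Rightarrow> nat set list \<Rightarrow> nat set \<Rightarrow> nat set" where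
  "unexcluded X Qs I = {y \<in> X - I. \<forall>Q\<in>set Qs. y \<in> Q \<longrightarrow> test_answer I Q}"

definition isolated_defectives :: "nat set \<Rightarrow> nat set list \<Rightarrow> nat set \<Rightarrow> nat set" where
  "isolated_defectives X Qs I = {x \<in> I. \<exists>Q\<in>set Qs. Q \<inter> (I \<union> unexcluded X Qs I) = {x}}"

lemma isolated_defectives_certainly_defective:
  assumes "\<forall>I'\<in>\<I>. I' \<subseteq> X"
  shows "isolated_defectives X Qs I \<subseteq> certainly_defective \<I> Qs (map (test_answer I) Qs)"
proof
  fix x assume "x \<in> isolated_defectives X Qs I"
  then obtain Q where "x \<in> I" "Q \<in> set Qs" and Q: "Q \<inter> (I \<union> unexcluded X Qs I) = {x}"
    unfolding isolated_defectives_def by blast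
  show "x \<in> certainly_defective \<I> Qs (map (test_answer I) Qs)"
    unfolding certainly_defective_def
  proof (intro CollectI ballI impI)
    fix I' assume "I' \<in> \<I>" and "map (test_answer I') Qs = map (test_answer I) Qs"
    then have same_answer: "test_answer I' Q' = test_answer I Q'" if "Q' \<in> set Qs" for Q'
      using that by (simp add: map_eq_conv)
    have "test_answer I Q" using Q \<open>x \<in> I\<close> unfolding test_answer_def by blast
    then obtain w where w: "w \<in> Q" "w \<in> I'"
      using same_answer[OF \<open>Q \<in> set Qs\<close>] unfolding test_answer_def by blast
    \<comment> \<open>a defective of I' outside I lies only in tests that are positive for I\<close>
    have "w \<in> I \<union> unexcluded X Qs I"
    proof (rule ccontr)
      assume "w \<notin> I \<union> unexcluded X Qs I"
      moreover have "w \<in> X" using w(2) \<open>I' \<in> \<I>\<close> assms by blast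
      ultimately obtain Q' where "Q' \<in> set Qs" "w \<in> Q'" "\<not> test_answer I Q'"
        unfolding unexcluded_def by blast
      with same_answer w(2) show False unfolding test_answer_def by blast
    qed
    with Q w have "w = x" by blast
    with w(2) show "x \<in> I'" by simp
  qed
qed

lemma card_unexcluded_less:
  assumes iso: "isolating K s X Qs" and "I \<subseteq> X" "2 * card I \<le> K" "s \<le> card I"
  shows "card (unexcluded X Qs I) < card I"
proof (rule ccontr)
  let ?Y = "unexcluded X Qs I"
  assume "\<not> card ?Y < card I"
  then obtain Z where Z: "Z \<subseteq> ?Y" "card Z = card I"
    using obtain_subset_with_card_n[of "card I" ?Y] by auto
  have "?Y \<subseteq> X" "?Y \<inter> I = {}" unfolding unexcluded_def by auto
  have "card (I \<union> Z) \<le> K"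
    using card_Un_le[of I Z] Z(2) assms(3) by linarith
  moreover have "I \<union> Z \<subseteq> X" using \<open>I \<subseteq> X\<close> \<open>?Y \<subseteq> X\<close> Z(1) by blast
  ultimately obtain Q x where "Q \<in> set Qs" "x \<in> Z" "Q \<inter> (I \<union> Z) = {x}"
    using isolatingD[OF iso, of "I \<union> Z" Z] Z(2) assms(4) by auto
  then have "x \<in> ?Y" "x \<in> Q" "\<not> test_answer I Q"
    using Z(1) \<open>?Y \<inter> I = {}\<close> unfolding test_answer_def by auto
  with \<open>Q \<in> set Qs\<close> show False unfolding unexcluded_def by blast
qed

lemma card_isolated_defectives_ge:
  assumes iso: "isolating K s X Qs" and "finite X" "I \<subseteq> X"
    and "2 * card I \<le> K" "0 < l" "l + s \<le> card I + 1"
  shows "l \<le> card (isolated_defectives X Qs I)"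
proof (rule ccontr)
  let ?C = "isolated_defectives X Qs I" and ?Y = "unexcluded X Qs I"
  assume "\<not> l \<le> card ?C"
  have "finite I" using \<open>I \<subseteq> X\<close> \<open>finite X\<close> by (rule finite_subset)
  have "?C \<subseteq> I" unfolding isolated_defectives_def by blast
  then have "s \<le> card (I - ?C)"
    using \<open>finite I\<close> \<open>\<not> l \<le> card ?C\<close> assms(6) by (simp add: card_Diff_subset finite_subset)
  have "card ?Y < card I"
    using card_unexcluded_less[OF iso assms(3,4)] assms(5,6) by linarith
  then have "card (I \<union> ?Y) \<le> K"
    using card_Un_le[of I ?Y] assms(4) by linarith
  moreover have "I \<union> ?Y \<subseteq> X" using \<open>I \<subseteq> X\<close> unfolding unexcluded_def by blast
  ultimately obtain Q x where "Q \<in> set Qs" "x \<in> I - ?C" "Q \<inter> (I \<union> ?Y) = {x}"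
    using isolatingD[OF iso, of "I \<union> ?Y" "I - ?C"] \<open>s \<le> card (I - ?C)\<close> by blast
  then show False unfolding isolated_defectives_def by blast
qed

lemma card_certainly_defective_isolating:
  assumes "isolating K s X Qs" "finite X" "I \<in> \<I>" "\<forall>I'\<in>\<I>. I' \<subseteq> X"
    and "2 * card I \<le> K" "0 < l" "l + s \<le> card I + 1"
  shows "l \<le> card (certainly_defective \<I> Qs (map (test_answer I) Qs))"
proof -
  have "I \<subseteq> X" using assms(3,4) by blast
  have "l \<le> card (isolated_defectives X Qs I)"
    using card_isolated_defectives_ge[OF assms(1,2) \<open>I \<subseteq> X\<close> assms(5-7)] .
  also have "\<dots> \<le> card (certainly_defective \<I> Qs (map (test_answer I) Qs))"
  proof (rule card_mono)
    show "finite (certainly_defective \<I> Qs (map (test_answer I) Qs))"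
      using certainly_defective_subset[OF assms(3)] \<open>I \<subseteq> X\<close> assms(2)
      by (meson finite_subset)
  qed (rule isolated_defectives_certainly_defective[OF assms(4)])
  finally show ?thesis .
qed

section \<open>Small isolating families from random colorings\<close>

lemma exists_hitting_sequence:
  fixes good :: "'p \<Rightarrow> 'a set"
  assumes "finite \<Omega>" "\<Omega> \<noteq> {}" "finite P"
    and few_bad: "\<And>p. p \<in> P \<Longrightarrow> real (card (\<Omega> - good p)) \<le> q * real (card \<Omega>)"
    and "real (card P) * q ^ m < 1"
  shows "\<exists>\<omega>\<in>{..<m} \<rightarrow>\<^sub>E \<Omega>. \<forall>p\<in>P. \<exists>i<m. \<omega> i \<in> good p"
proof (rule ccontr)
  let ?seqs = "{..<m} \<rightarrow>\<^sub>E \<Omega>" and ?bad = "\<lambda>p. {..<m} \<rightarrow>\<^sub>E (\<Omega> - good p)"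
  assume no_hit: "\<not> ?thesis"
  have "?seqs \<subseteq> (\<Union>p\<in>P. ?bad p)"
  proof
    fix \<omega> assume "\<omega> \<in> ?seqs"
    with no_hit obtain p where "p \<in> P" "\<forall>i<m. \<omega> i \<notin> good p" by blast
    with \<open>\<omega> \<in> ?seqs\<close> show "\<omega> \<in> (\<Union>p\<in>P. ?bad p)" by (auto simp: PiE_iff)
  qed
  moreover have "finite (\<Union>p\<in>P. ?bad p)"
    using assms(1,3) by (auto intro!: finite_PiE)
  ultimately have "card ?seqs \<le> card (\<Union>p\<in>P. ?bad p)" by (rule card_mono[rotated])
  also have "\<dots> \<le> (\<Sum>p\<in>P. card (?bad p))" by (rule card_UN_le[OF assms(3)])
  finally have "card ?seqs \<le> (\<Sum>p\<in>P. card (\<Omega> - good p) ^ m)"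
    by (simp add: card_PiE)
  then have "real (card ?seqs) \<le> (\<Sum>p\<in>P. real (card (\<Omega> - good p)) ^ m)"
    using of_nat_mono by fastforce
  also have "\<dots> \<le> (\<Sum>p\<in>P. (q * real (card \<Omega>)) ^ m)"
    by (intro sum_mono power_mono few_bad) simp_all
  also have "\<dots> = (real (card P) * q ^ m) * real (card \<Omega>) ^ m"
    by (simp add: power_mult_distrib)
  also have "\<dots> < 1 * real (card \<Omega>) ^ m"
    using assms(1,2,5) by (intro mult_strict_right_mono) (simp_all add: card_gt_0_iff)
  finally show False by (simp add: card_PiE)
qed

lemma card_colorings_isolating:
  fixes A U S :: "'a set"
  assumes "0 < B" "finite A" "U \<subseteq> A" "S \<subseteq> U"
  shows "card S * ((B - 1) ^ (card U - 1) * B ^ (card A - card U))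
    \<le> card ((A \<rightarrow>\<^sub>E {..<B}) \<inter> {g. \<exists>x\<in>S. {a \<in> A. g a = 0} \<inter> U = {x}})"
proof -
  \<comment> \<open>colorings in which x is the only element of U with color 0\<close>
  define E where "E x = PiE A (\<lambda>a. if a = x then {0} else if a \<in> U then {1..<B} else {..<B})" for x
  have "finite U" using assms(3,2) by (rule finite_subset)
  have card_E: "card (E x) = (B - 1) ^ (card U - 1) * B ^ (card A - card U)" if "x \<in> U" for x
  proof -
    let ?size = "\<lambda>a. card (if a = x then {0} else if a \<in> U then {1..<B} else {..<B})"
    have "card (E x) = prod ?size (U - {x}) * ?size x * prod ?size (A - U)"
      using assms(2,3) \<open>finite U\<close> that unfolding E_def
      by (simp add: card_PiE prod.subset_diff[of U A] prod.remove[of U x] mult_ac)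
    also have "prod ?size (U - {x}) = (B - 1) ^ (card U - 1)"
      using \<open>finite U\<close> that by (simp add: card_Diff_singleton)
    also have "prod ?size (A - U) = prod (\<lambda>_. B) (A - U)"
      by (rule prod.cong) (use that in auto)
    also have "\<dots> = B ^ (card A - card U)"
      using assms(3) \<open>finite U\<close> by (simp add: card_Diff_subset)
    finally show ?thesis by simp
  qed
  have E_isolates: "g \<in> A \<rightarrow>\<^sub>E {..<B} \<and> {a \<in> A. g a = 0} \<inter> U = {x}"
    if "g \<in> E x" "x \<in> U" for g x
    using that assms(1,3) unfolding E_def by (fastforce simp: PiE_iff split: if_splits)
  have "(\<Sum>x\<in>S. card (E x)) = (\<Sum>x\<in>S. (B - 1) ^ (card U - 1) * B ^ (card A - card U))"
    using card_E assms(4) by (intro sum.cong) auto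
  then have "card S * ((B - 1) ^ (card U - 1) * B ^ (card A - card U)) = (\<Sum>x\<in>S. card (E x))"
    by simp
  also have "\<dots> = card (\<Union>x\<in>S. E x)"
  proof (rule card_UN_disjoint[symmetric])
    show "finite S" using assms(4) \<open>finite U\<close> by (rule finite_subset)
    show "\<forall>x\<in>S. finite (E x)" using assms(2) unfolding E_def by (simp add: finite_PiE)
    show "\<forall>x\<in>S. \<forall>y\<in>S. x \<noteq> y \<longrightarrow> E x \<inter> E y = {}"
      using E_isolates assms(4) by blast
  qed
  also have "\<dots> \<le> card ((A \<rightarrow>\<^sub>E {..<B}) \<inter> {g. \<exists>x\<in>S. {a \<in> A. g a = 0} \<inter> U = {x}})"
  proof (rule card_mono)
    show "finite ((A \<rightarrow>\<^sub>E {..<B}) \<inter> {g. \<exists>x\<in>S. {a \<in> A. g a = 0} \<inter> U = {x}})"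
      using assms(2) by (simp add: finite_PiE)
    show "(\<Union>x\<in>S. E x) \<subseteq> (A \<rightarrow>\<^sub>E {..<B}) \<inter> {g. \<exists>x\<in>S. {a \<in> A. g a = 0} \<inter> U = {x}}"
      using E_isolates assms(4) by blast
  qed
  finally show ?thesis .
qed

lemma power_le_twice_pred_power:
  fixes B k :: nat
  assumes "2 * k \<le> B"
  shows "B ^ k \<le> 2 * (B - 1) ^ k"
proof (cases "B = 0")
  case False
  have "1 / 2 \<le> 1 + real k * (- 1 / real B)"
    using assms False by (simp add: field_simps)
  also have "\<dots> \<le> (1 + (- 1 / real B)) ^ k"
    using False by (intro Bernoulli_inequality) simp
  finally have "real B ^ k * (1 / 2) \<le> real B ^ k * (1 - 1 / real B) ^ k"
    by (intro mult_left_mono) simp_all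
  also have "\<dots> = real (B - 1) ^ k"
    using False by (simp add: power_mult_distrib[symmetric] field_simps of_nat_diff)
  finally show ?thesis by (simp flip: of_nat_power)
qed (use assms in simp)

lemma power_le_isolation_count:
  fixes B K n c s :: nat
  assumes "0 < K" "K \<le> n" "2 * K \<le> B" "2 * B \<le> c * s"
  shows "B ^ n \<le> c * (s * ((B - 1) ^ (K - 1) * B ^ (n - K)))"
proof -
  have "B ^ n = B * B ^ (K - 1) * B ^ (n - K)"
    using assms(1,2) by (simp flip: power_Suc power_add)
  also have "\<dots> \<le> B * (2 * (B - 1) ^ (K - 1)) * B ^ (n - K)"
    using power_le_twice_pred_power[of "K - 1" B] assms(3) by simp
  also have "\<dots> = (2 * B) * ((B - 1) ^ (K - 1) * B ^ (n - K))"
    by simp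
  also have "\<dots> \<le> (c * s) * ((B - 1) ^ (K - 1) * B ^ (n - K))"
    using assms(4) by (rule mult_right_mono) simp
  finally show ?thesis by (simp add: mult.assoc)
qed

lemma card_colorings_not_isolating_le:
  fixes A U S :: "'a set" and B c :: nat
  assumes "finite A" "U \<subseteq> A" "S \<subseteq> U" "U \<noteq> {}" "2 * card U \<le> B" "2 * B \<le> c * card S"
  shows "real (card ((A \<rightarrow>\<^sub>E {..<B}) - {g. \<exists>x\<in>S. {a \<in> A. g a = 0} \<inter> U = {x}}))
    \<le> (1 - 1 / real c) * real (card (A \<rightarrow>\<^sub>E {..<B}))"
proof -
  let ?\<Omega> = "A \<rightarrow>\<^sub>E {..<B}" and ?good = "{g. \<exists>x\<in>S. {a \<in> A. g a = 0} \<inter> U = {x}}"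
  have "finite U" using assms(2,1) by (rule finite_subset)
  then have "0 < card U" "card U \<le> card A"
    using assms(1,2,4) by (simp_all add: card_gt_0_iff card_mono)
  then have "0 < B" using assms(5) by linarith
  then have "0 < c" using assms(6) by (cases "c = 0") auto
  have "card ?\<Omega> = B ^ card A" using assms(1) by (simp add: card_PiE)
  also have "\<dots> \<le> c * (card S * ((B - 1) ^ (card U - 1) * B ^ (card A - card U)))"
    using \<open>0 < card U\<close> \<open>card U \<le> card A\<close> assms(5,6) by (rule power_le_isolation_count)
  also have "\<dots> \<le> c * card (?\<Omega> \<inter> ?good)"
    using card_colorings_isolating[OF \<open>0 < B\<close> assms(1-3)] by simp
  finally have "real (card ?\<Omega>) / real c \<le> real (card (?\<Omega> \<inter> ?good))"
    using \<open>0 < c\<close> by (simp add: divide_le_eq mult.commute flip: of_nat_mult)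
  moreover have "card ?\<Omega> = card (?\<Omega> \<inter> ?good) + card (?\<Omega> - ?good)"
    using assms(1) by (intro card_Int_Diff) (simp add: finite_PiE)
  moreover have "(1 - 1 / real c) * real (card ?\<Omega>) = real (card ?\<Omega>) - real (card ?\<Omega>) / real c"
    by (simp add: left_diff_distrib)
  ultimately show ?thesis by linarith
qed

lemma card_subset_pairs:
  assumes "finite A"
  shows "card {(U, S). U \<subseteq> A \<and> card U = K \<and> S \<subseteq> U} = (card A choose K) * 2 ^ K"
proof -
  let ?X = "{U. U \<subseteq> A \<and> card U = K}"
  have "finite ?X" using assms by simp
  have "{(U, S). U \<subseteq> A \<and> card U = K \<and> S \<subseteq> U} = Sigma ?X Pow" by auto
  also have "card \<dots> = (\<Sum>U\<in>?X. card (Pow U))"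
    using \<open>finite ?X\<close> assms by (intro card_SigmaI) (auto dest: finite_subset)
  also have "\<dots> = (\<Sum>U\<in>?X. 2 ^ K)"
    using assms by (intro sum.cong) (auto simp: card_Pow dest: finite_subset)
  also have "\<dots> = (card A choose K) * 2 ^ K"
    using n_subsets[OF assms] by simp
  finally show ?thesis .
qed

lemma power_div_fact_le_exp: "real k ^ k / fact k \<le> exp (real k)"
proof -
  have series: "(\<lambda>i. real k ^ i /\<^sub>R fact i) sums exp (real k)"
    by (rule exp_converges)
  have "(\<Sum>i\<in>{k}. real k ^ i /\<^sub>R fact i) \<le> (\<Sum>i. real k ^ i /\<^sub>R fact i)"
    using series by (intro sum_le_suminf) (auto simp: sums_iff)
  then show ?thesis using sums_unique[OF series] by (simp add: divide_inverse mult.commute)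
qed

lemma binomial_le_exp_pow:
  assumes "0 < k"
  shows "real (n choose k) \<le> (exp 1 * real n / real k) ^ k"
proof -
  have binomial_fact: "real (n choose k) * fact k \<le> real n ^ k"
    using binomial_fact_pow[of n k] by (metis of_nat_fact of_nat_le_iff of_nat_mult of_nat_power)
  have "real (n choose k) * real k ^ k \<le> real (n choose k) * (exp (real k) * fact k)"
    using power_div_fact_le_exp[of k] by (intro mult_left_mono) (simp_all add: divide_le_eq)
  also have "\<dots> = exp (real k) * (real (n choose k) * fact k)"
    by (simp only: mult_ac)
  also have "\<dots> \<le> exp (real k) * real n ^ k"
    using binomial_fact by (rule mult_left_mono) simp
  finally have "real (n choose k) * real k ^ k \<le> exp (real k) * real n ^ k" .
  then have "real (n choose k) \<le> exp (real k) * real n ^ k / real k ^ k"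
    using assms by (simp add: le_divide_eq)
  also have "\<dots> = (exp 1 * real n / real k) ^ k"
    using exp_of_nat_mult[of k "1::real"] by (simp add: power_divide power_mult_distrib)
  finally show ?thesis .
qed

lemma isolation_union_bound:
  fixes n D m :: nat
  assumes "1 \<le> D" "D \<le> n" and m: "2048 * real D * ln (real n / real D) < real m"
  shows "real (n choose (8 * D)) * 2 ^ (8 * D) * (255 / 256) ^ m < 1"
proof -
  let ?K = "8 * D" and ?r = "real n / real D"
  have "1 \<le> ?r" using assms(1,2) by simp
  have "real (n choose ?K) * 2 ^ ?K \<le> (exp 1 * real n / real ?K) ^ ?K * 2 ^ ?K"
    using binomial_le_exp_pow[of ?K n] assms(1) by (intro mult_right_mono) simp_all
  also have "\<dots> = (2 * exp 1 * real n / real ?K) ^ ?K"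
    by (simp add: power_mult_distrib[symmetric] mult_ac)
  also have "\<dots> \<le> ?r ^ ?K"
  proof (rule power_mono)
    have "2 * exp 1 * real n \<le> 8 * real n"
      using exp_le by (intro mult_right_mono) simp_all
    then show "2 * exp 1 * real n / real ?K \<le> ?r"
      using assms(1) by (simp add: field_simps)
  qed simp
  also have "\<dots> = exp (ln ?r) ^ ?K"
    using \<open>1 \<le> ?r\<close> by simp
  also have "\<dots> = exp (real ?K * ln ?r)"
    by (rule exp_of_nat_mult[symmetric])
  finally have binomial_part: "real (n choose ?K) * 2 ^ ?K \<le> exp (real ?K * ln ?r)" .
  have "(255 / 256 :: real) ^ m \<le> exp (- 1 / 256) ^ m"
    using exp_ge_add_one_self[of "- 1 / 256 :: real"] by (intro power_mono) simp_all
  also have "\<dots> = exp (- real m / 256)"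
    by (simp add: exp_of_nat_mult[symmetric])
  finally have geometric_part: "(255 / 256 :: real) ^ m \<le> exp (- real m / 256)" .
  have "real (n choose ?K) * 2 ^ ?K * (255 / 256) ^ m \<le> exp (real ?K * ln ?r) * exp (- real m / 256)"
    using binomial_part geometric_part by (intro mult_mono) simp_all
  also have "\<dots> = exp (real ?K * ln ?r - real m / 256)"
    by (simp add: exp_add[symmetric])
  also have "\<dots> < 1"
    using m by simp
  finally show ?thesis .
qed

(* A random coloring with 16D colors isolates a point of S in U with probability at least 1/256;
   the union bound over all pairs (U, S) does the rest. *)
lemma exists_isolating_colorings:
  fixes n D m :: nat
  assumes "1 \<le> D" "8 * D \<le> n" "2048 * real D * ln (real n / real D) < real m"
  shows "\<exists>\<omega>. \<forall>U S. U \<subseteq> {1..n} \<longrightarrow> card U = 8 * D \<longrightarrow> S \<subseteq> U \<longrightarrow> card S = D div 8 + 1 \<longrightarrow>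
           (\<exists>i<m. \<exists>x\<in>S. {a \<in> {1..n}. \<omega> i a = (0::nat)} \<inter> U = {x})"
proof -
  let ?A = "{1..n}" and ?B = "16 * D" and ?K = "8 * D" and ?s = "D div 8 + 1"
  let ?\<Omega> = "?A \<rightarrow>\<^sub>E {..<?B}"
  define P where "P = {(U, S). U \<subseteq> ?A \<and> card U = ?K \<and> S \<subseteq> U \<and> card S = ?s}"
  define good :: "nat set \<times> nat set \<Rightarrow> (nat \<Rightarrow> nat) set"
    where "good = (\<lambda>(U, S). {g. \<exists>x\<in>S. {a \<in> ?A. g a = 0} \<inter> U = {x}})"
  have "\<exists>\<omega>\<in>{..<m} \<rightarrow>\<^sub>E ?\<Omega>. \<forall>p\<in>P. \<exists>i<m. \<omega> i \<in> good p"
  proof (rule exists_hitting_sequence[where q = "255 / 256"])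
    show "finite ?\<Omega>" by (simp add: finite_PiE)
    show "?\<Omega> \<noteq> {}" using assms(1) by (simp add: PiE_eq_empty_iff lessThan_empty_iff)
    let ?pairs = "{(U, S). U \<subseteq> ?A \<and> card U = ?K \<and> S \<subseteq> U}"
    have "P \<subseteq> ?pairs" unfolding P_def by auto
    moreover have "finite ?pairs"
      by (rule finite_subset[of _ "Pow ?A \<times> Pow ?A"]) auto
    ultimately show "finite P" by (rule finite_subset)
    have "card P \<le> (n choose ?K) * 2 ^ ?K"
      using card_mono[OF \<open>finite ?pairs\<close> \<open>P \<subseteq> ?pairs\<close>] card_subset_pairs[of ?A ?K] by simp
    then have "real (card P) * (255 / 256) ^ m \<le> real (n choose ?K) * 2 ^ ?K * (255 / 256) ^ m"
      by (intro mult_right_mono) (simp_all add: of_nat_le_iff[symmetric, where 'a=real])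
    also have "\<dots> < 1"
      using assms by (intro isolation_union_bound) simp_all
    finally show "real (card P) * (255 / 256) ^ m < 1" .
    show "real (card (?\<Omega> - good p)) \<le> 255 / 256 * real (card ?\<Omega>)" if "p \<in> P" for p
    proof -
      obtain U S where p: "p = (U, S)" "U \<subseteq> ?A" "card U = ?K" "S \<subseteq> U" "card S = ?s"
        using \<open>p \<in> P\<close> unfolding P_def by auto
      have "U \<noteq> {}" using p(3) assms(1) by auto
      have "D mod 8 < 8" "256 * card S = 256 * (D div 8) + 256" using p(5) by simp_all
      then have "2 * ?B \<le> 256 * card S"
        using div_mult_mod_eq[of D 8] by linarith
      moreover have "2 * card U \<le> ?B" using p(3) by linarith
      ultimately have "real (card (?\<Omega> - good p)) \<le> (1 - 1 / real (256::nat)) * real (card ?\<Omega>)"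
        using card_colorings_not_isolating_le[OF _ p(2,4) \<open>U \<noteq> {}\<close>] unfolding p(1) good_def
        by (simp only: finite_atLeastAtMost case_prod_conv)
      then show ?thesis by simp
    qed
  qed
  then obtain \<omega> where hit: "\<forall>p\<in>P. \<exists>i<m. \<omega> i \<in> good p" by blast
  show ?thesis
  proof (intro exI[of _ \<omega>] allI impI)
    fix U S assume "U \<subseteq> ?A" "card U = ?K" "S \<subseteq> U" "card S = ?s"
    then have "(U, S) \<in> P" unfolding P_def by simp
    with hit obtain i where "i < m" "\<omega> i \<in> good (U, S)" by blast
    moreover from \<open>\<omega> i \<in> good (U, S)\<close> obtain x
      where "x \<in> S" "{a \<in> ?A. \<omega> i a = 0} \<inter> U = {x}"
      unfolding good_def by auto
    ultimately show "\<exists>i<m. \<exists>x\<in>S. {a \<in> ?A. \<omega> i a = 0} \<inter> U = {x}" by blast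
  qed
qed

lemma exists_isolating_tests:
  fixes n D m :: nat
  assumes "1 \<le> D" "8 * D \<le> n" "2048 * real D * ln (real n / real D) < real m"
  shows "\<exists>Qs. length Qs = m \<and> (\<forall>Q\<in>set Qs. Q \<subseteq> {1..n}) \<and>
    isolating (8 * D) (D div 8 + 1) {1..n} Qs"
proof -
  obtain \<omega> :: "nat \<Rightarrow> nat \<Rightarrow> nat" where hit:
    "\<And>U S. \<lbrakk>U \<subseteq> {1..n}; card U = 8 * D; S \<subseteq> U; card S = D div 8 + 1\<rbrakk>
       \<Longrightarrow> \<exists>i<m. \<exists>x\<in>S. {a \<in> {1..n}. \<omega> i a = 0} \<inter> U = {x}"
    using exists_isolating_colorings[OF assms] by blast
  define Qs where "Qs = map (\<lambda>i. {a \<in> {1..n}. \<omega> i a = 0}) [0..<m]"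
  have "isolating (8 * D) (D div 8 + 1) {1..n} Qs"
  proof (rule isolatingI_card_eq)
    fix U S assume "U \<subseteq> {1..n}" "card U = 8 * D" "S \<subseteq> U" "card S = D div 8 + 1"
    then obtain i x where "i < m" "x \<in> S" "{a \<in> {1..n}. \<omega> i a = 0} \<inter> U = {x}"
      using hit by blast
    moreover from \<open>i < m\<close> have "{a \<in> {1..n}. \<omega> i a = 0} \<in> set Qs"
      unfolding Qs_def by simp
    ultimately show "\<exists>Q\<in>set Qs. \<exists>x\<in>S. Q \<inter> U = {x}" by blast
  qed (use assms(2) in simp_all)
  moreover have "length Qs = m" "\<forall>Q\<in>set Qs. Q \<subseteq> {1..n}" unfolding Qs_def by auto
  ultimately show ?thesis by blast
qed

section \<open>The algorithm and its number of tests\<close>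

lemma card_le_test_budget:
  assumes "I \<subseteq> {1..n}"
  shows "real (card I) \<le> real (card I) * (log 2 (real n / real (card I)) + 1)"
proof (cases "card I = 0")
  case False
  have "card I \<le> n" using card_mono[OF _ assms] by simp
  with False show ?thesis by simp
qed simp

lemma ln_le_log2: "1 \<le> x \<Longrightarrow> ln x \<le> log 2 x"
  using ln_2_less_1 by (simp add: log_def divide_simps mult_left_le)

lemma isolating_length_le_budget:
  fixes n D d m :: nat
  assumes "1 \<le> D" "real d / 4 \<le> real D" "real D \<le> 4 * real d" "d \<le> n" "D \<le> n"
    and m: "real m \<le> 2048 * real D * ln (real n / real D) + 2"
  shows "real m \<le> 20000 * real d * (log 2 (real n / real d) + 1)"
proof -
  define L where "L = log 2 (real n / real d)"
  have "0 < real d" using assms(1,3) by linarith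
  then have "0 \<le> L" unfolding L_def using assms(4) by simp
  have "ln (real n / real D) \<le> log 2 (real n / real D)"
    using assms(1,5) by (intro ln_le_log2) simp
  also have "\<dots> \<le> log 2 (4 * (real n / real d))"
    using assms(1,2,5) \<open>0 < real d\<close> by (simp add: field_simps mult_left_mono)
  also have "\<dots> = L + 2"
    unfolding L_def using \<open>0 < real d\<close> assms(4) log_pow_cancel[of 2 2]
    by (subst log_mult) simp_all
  finally have "ln (real n / real D) \<le> L + 2" .
  moreover have "0 \<le> ln (real n / real D)"
    using assms(1,5) by simp
  ultimately have "2048 * real D * ln (real n / real D) \<le> 2048 * (4 * real d) * (L + 2)"
    using assms(3) by (intro mult_mono) simp_all
  moreover have "real d \<le> real d * (L + 1)" and "1 \<le> real d * (L + 1)"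
    using \<open>0 \<le> L\<close> \<open>0 < real d\<close> mult_mono[of 1 "real d" 1 "L + 1"] by simp_all
  moreover have "real d * (L + 2) = real d * (L + 1) + real d"
    by (simp add: algebra_simps)
  ultimately have "real m \<le> 20000 * (real d * (L + 1))"
    using m by linarith
  then show ?thesis unfolding L_def by (simp add: mult.assoc)
qed

definition admissible :: "nat \<Rightarrow> nat \<Rightarrow> nat set set" where
  "admissible n D = {I. I \<subseteq> {1..n} \<and> real (card I) / 4 \<le> real D \<and> real D \<le> 4 * real (card I)}"

definition certifying_tests :: "real \<Rightarrow> nat \<Rightarrow> nat \<Rightarrow> nat \<Rightarrow> nat set list \<Rightarrow> bool" where
  "certifying_tests C n D l Qs \<longleftrightarrow> nonadaptive_alg n Qs \<and>
     (\<forall>I\<in>admissible n D.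
        l \<le> card (certainly_defective (admissible n D) Qs (map (test_answer I) Qs)) \<and>
        real (length Qs) \<le> C * real (card I) * (log 2 (real n / real (card I)) + 1))"

lemma certifying_tests_Nil:
  assumes "0 \<le> C"
  shows "certifying_tests C n D 0 []"
proof -
  have "0 \<le> C * real (card I) * (log 2 (real n / real (card I)) + 1)" if "I \<in> admissible n D" for I
    using card_le_test_budget[of I n] that assms unfolding admissible_def
    by (simp add: mult.assoc)
  then show ?thesis unfolding certifying_tests_def nonadaptive_alg_def by simp
qed

lemma certifying_singleton_tests:
  assumes "real l \<le> real D / 8" "n < 8 * D" "32 \<le> C"
  shows "certifying_tests C n D l (singleton_tests n)"
  unfolding certifying_tests_def
proof (intro conjI ballI)
  show "nonadaptive_alg n (singleton_tests n)"
    unfolding nonadaptive_alg_def singleton_tests_def by auto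
  fix I assume I: "I \<in> admissible n D"
  then have "I \<subseteq> {1..n}" "real D \<le> 4 * real (card I)"
    unfolding admissible_def by auto
  then have "real l \<le> real (card I)" "real n \<le> 32 * real (card I)"
    using assms(1,2) by linarith+
  then show "l \<le> card (certainly_defective (admissible n D) (singleton_tests n)
      (map (test_answer I) (singleton_tests n)))"
    using certainly_defective_singleton_tests[OF I \<open>I \<subseteq> {1..n}\<close>] by simp
  have "32 * real (card I) \<le> C * real (card I)"
    using assms(3) by (intro mult_right_mono) simp_all
  also have "\<dots> \<le> C * (real (card I) * (log 2 (real n / real (card I)) + 1))"
    using card_le_test_budget[OF \<open>I \<subseteq> {1..n}\<close>] assms(3) by (intro mult_left_mono) simp_all
  finally show "real (length (singleton_tests n)) \<le> C * real (card I) * (log 2 (real n / real (card I)) + 1)"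
    using \<open>real n \<le> 32 * real (card I)\<close> by (simp add: singleton_tests_def mult.assoc)
qed

lemma certifying_isolating_tests:
  assumes "real l \<le> real D / 8" "0 < l" "8 * D \<le> n"
    and "nonadaptive_alg n Qs" and iso: "isolating (8 * D) (D div 8 + 1) {1..n} Qs"
    and "real (length Qs) \<le> 2048 * real D * ln (real n / real D) + 2"
  shows "certifying_tests 20000 n D l Qs"
  unfolding certifying_tests_def
proof (intro conjI ballI)
  fix I assume I: "I \<in> admissible n D"
  then have "I \<subseteq> {1..n}" and d: "real (card I) / 4 \<le> real D" "real D \<le> 4 * real (card I)"
    unfolding admissible_def by auto
  have "\<forall>I'\<in>admissible n D. I' \<subseteq> {1..n}" unfolding admissible_def by blast
  moreover have "real (D div 8) \<le> real D / 8" by linarith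
  then have "l + (D div 8 + 1) \<le> card I + 1" using assms(1) d(2) by linarith
  moreover have "2 * card I \<le> 8 * D" using d(1) by linarith
  ultimately show "l \<le> card (certainly_defective (admissible n D) Qs (map (test_answer I) Qs))"
    using card_certainly_defective_isolating[OF iso finite_atLeastAtMost I] assms(2) by blast
  have "card I \<le> n" using card_mono[OF _ \<open>I \<subseteq> {1..n}\<close>] by simp
  moreover have "1 \<le> D" using assms(1,2) by linarith
  ultimately show "real (length Qs) \<le> 20000 * real (card I) * (log 2 (real n / real (card I)) + 1)"
    using isolating_length_le_budget[OF _ d _ _ assms(6)] assms(3) by simp
qed (fact assms(4))

lemma exists_certifying_tests:
  assumes "real l \<le> real D / 8"
  shows "\<exists>Qs. certifying_tests 20000 n D l Qs"
proof -
  consider "l = 0" | "n < 8 * D" | "0 < l" "8 * D \<le> n" by linarith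
  then show ?thesis
  proof cases
    case 1
    have "certifying_tests 20000 n D l []"
      unfolding 1 by (rule certifying_tests_Nil) simp
    then show ?thesis ..
  next
    case 2
    have "certifying_tests 20000 n D l (singleton_tests n)"
      using 2 by (intro certifying_singleton_tests[OF assms]) simp_all
    then show ?thesis ..
  next
    case 3
    define m where "m = nat \<lceil>2048 * real D * ln (real n / real D)\<rceil> + 1"
    have "1 \<le> D" using 3(1) assms by linarith
    then have "0 \<le> 2048 * real D * ln (real n / real D)" using 3(2) by simp
    then have m: "2048 * real D * ln (real n / real D) < real m"
      "real m \<le> 2048 * real D * ln (real n / real D) + 2"
      unfolding m_def by linarith+
    obtain Qs where "length Qs = m" "\<forall>Q\<in>set Qs. Q \<subseteq> {1..n}"
      and "isolating (8 * D) (D div 8 + 1) {1..n} Qs"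
      using exists_isolating_tests[OF \<open>1 \<le> D\<close> 3(2) m(1)] by auto
    then have "certifying_tests 20000 n D l Qs"
      using 3 m(2) by (intro certifying_isolating_tests[OF assms]) (simp_all add: nonadaptive_alg_def)
    then show ?thesis ..
  qed
qed

theorem theorem8:
  "\<exists>C::real. C > 0 \<and>
     (\<forall>(n::nat) (D::nat) (l::nat). real l \<le> real D / 8 \<longrightarrow>
        (\<exists>(Qs :: nat set list) (f :: bool list \<Rightarrow> nat set).
           nonadaptive_alg n Qs \<and>
           (\<forall>I. I \<subseteq> {1..n} \<and> real (card I) / 4 \<le> real D \<and> real D \<le> 4 * real (card I) \<longrightarrow>
                detects Qs f l I \<and>
                real (length Qs) \<le> C * real (card I) * (log 2 (real n / real (card I)) + 1))))"
proof (intro exI[of _ 20000] conjI allI impI)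
  fix n D l :: nat
  assume "real l \<le> real D / 8"
  then obtain Qs where "certifying_tests 20000 n D l Qs"
    using exists_certifying_tests by blast
  then show "\<exists>Qs f. nonadaptive_alg n Qs \<and>
      (\<forall>I. I \<subseteq> {1..n} \<and> real (card I) / 4 \<le> real D \<and> real D \<le> 4 * real (card I) \<longrightarrow>
         detects Qs f l I \<and> real (length Qs) \<le> 20000 * real (card I) * (log 2 (real n / real (card I)) + 1))"
    unfolding certifying_tests_def
    by (intro exI[of _ Qs] exI[of _ "certainty_decoder (admissible n D) l Qs"])
      (auto simp: admissible_def intro: detects_certainty_decoder)
qed simp

end
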